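(* For every integer $d\ge 1$, a countable graph $G$ is a $d$-sphere graph if and only if $G\in\mathcal{S}^d$.
   Context: Let $\mathbb{D}^d=\{x\in\mathbb{R}^{d+1}: |x|\le 1\}$ and let $\mathcal{H}_d=\{\mathbb{D}^d\cap H: H \text{ a hyperplane of } \mathbb{R}^{d+1} \text{ meeting the interior of } \mathbb{D}^d\}$. A $d$-sphere graph is a graph that is the intersection graph of a subfamily of $\mathcal{H}_d$ (vertices identified with members of the family, adjacent iff the sets intersect). For $d\ge 2$, $\mathcal{S}^d$ is the class of graphs that are intersection graphs of families of spheres in $\mathbb{R}^d$ (a sphere being the boundary of a closed ball of positive radius); $\mathcal{S}^1$ is the class of circle graphs, i.e. intersection graphs of families of chords of the circle $\mathbb{S}^1$. *)

theory Defs
  imports "HOL-Analysis.Analysis"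
begin

text \<open>Euclidean space R^n, represented as real sequences vanishing from index n on.\<close>
definition euc :: "nat \<Rightarrow> (nat \<Rightarrow> real) set" where
  "euc n = {x. \<forall>i\<ge>n. x i = 0}"

definition enorm :: "nat \<Rightarrow> (nat \<Rightarrow> real) \<Rightarrow> real" where
  "enorm n x = sqrt (\<Sum>i<n. (x i)\<^sup>2)"

definition disc :: "nat \<Rightarrow> (nat \<Rightarrow> real) set" where
  "disc d = {x \<in> euc (Suc d). enorm (Suc d) x \<le> 1}"

definition disc_interior :: "nat \<Rightarrow> (nat \<Rightarrow> real) set" where
  "disc_interior d = {x \<in> euc (Suc d). enorm (Suc d) x < 1}"

definition is_hyperplane :: "nat \<Rightarrow> (nat \<Rightarrow> real) set \<Rightarrow> bool" where
  "is_hyperplane n H \<longleftrightarrow>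
     (\<exists>a b. (\<exists>i<n. a i \<noteq> 0) \<and> H = {x \<in> euc n. (\<Sum>i<n. a i * x i) = b})"

definition hyp_sections :: "nat \<Rightarrow> (nat \<Rightarrow> real) set set" where
  "hyp_sections d = {disc d \<inter> H | H. is_hyperplane (Suc d) H \<and> H \<inter> disc_interior d \<noteq> {}}"

definition spheres :: "nat \<Rightarrow> (nat \<Rightarrow> real) set set" where
  "spheres n = {{x \<in> euc n. enorm n (\<lambda>i. x i - c i) = r} | c r. c \<in> euc n \<and> r > 0}"

definition chords :: "complex set set" where
  "chords = {closed_segment p q | p q. norm p = 1 \<and> norm q = 1 \<and> p \<noteq> q}"

definition graph :: "'v set \<Rightarrow> ('v \<Rightarrow> 'v \<Rightarrow> bool) \<Rightarrow> bool" where
  "graph V E \<longleftrightarrow> (\<forall>u v. E u v \<longrightarrow> E v u) \<and> (\<forall>v. \<not> E v v)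
                  \<and> (\<forall>u v. E u v \<longrightarrow> u \<in> V \<and> v \<in> V)"

text \<open>(V,E) is (isomorphic to) the intersection graph of a subfamily of F:
  vertices are identified (injectively) with members of F, adjacent iff they meet.\<close>
definition is_intersection_graph_of :: "'a set set \<Rightarrow> 'v set \<Rightarrow> ('v \<Rightarrow> 'v \<Rightarrow> bool) \<Rightarrow> bool" where
  "is_intersection_graph_of F V E \<longleftrightarrow>
     (\<exists>f. inj_on f V \<and> f ` V \<subseteq> F \<and>
          (\<forall>u\<in>V. \<forall>v\<in>V. u \<noteq> v \<longrightarrow> (E u v \<longleftrightarrow> f u \<inter> f v \<noteq> {})))"

definition d_sphere_graph :: "nat \<Rightarrow> 'v set \<Rightarrow> ('v \<Rightarrow> 'v \<Rightarrow> bool) \<Rightarrow> bool" where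
  "d_sphere_graph d V E \<longleftrightarrow> is_intersection_graph_of (hyp_sections d) V E"

definition in_S :: "nat \<Rightarrow> 'v set \<Rightarrow> ('v \<Rightarrow> 'v \<Rightarrow> bool) \<Rightarrow> bool" where
  "in_S d V E \<longleftrightarrow> (if d = 1 then is_intersection_graph_of chords V E
                    else is_intersection_graph_of (spheres d) V E)"

end

theory Submission
  imports Defs "HOL-Computational_Algebra.Polynomial"
begin

text \<open>For \<open>d \<ge> 2\<close> everything is decided on the boundary sphere \<open>S^d\<close> of the ball: two hyperplane
  sections meet iff they meet on \<open>S^d\<close> (a line through a common point inside both hyperplanes
  leaves the ball through the sphere), and a section is determined by its trace on \<open>S^d\<close>.
  Stereographic projection from a pole \<open>p \<in> S^d\<close> maps the traces of hyperplanes avoiding \<open>p\<close>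
  exactly onto the spheres of \<open>R^d\<close>. A countable family of sections always misses some pole,
  because the moment curve, lifted to \<open>S^d\<close>, meets each hyperplane in finitely many points.
  For \<open>d = 1\<close> the sections of the disc are exactly the chords of the unit circle.\<close>

definition dot :: "nat \<Rightarrow> (nat \<Rightarrow> real) \<Rightarrow> (nat \<Rightarrow> real) \<Rightarrow> real" where
  "dot n x y = (\<Sum>i<n. x i * y i)"

definition line_point :: "(nat \<Rightarrow> real) \<Rightarrow> real \<Rightarrow> (nat \<Rightarrow> real) \<Rightarrow> (nat \<Rightarrow> real)" where
  "line_point x t v = (\<lambda>i. x i + t * v i)"

definition unit_vec :: "nat \<Rightarrow> nat \<Rightarrow> real" where
  "unit_vec j = (\<lambda>i. if i = j then 1 else 0)"

definition hplane :: "nat \<Rightarrow> (nat \<Rightarrow> real) \<Rightarrow> real \<Rightarrow> (nat \<Rightarrow> real) set" where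
  "hplane n a b = {x \<in> euc n. dot n a x = b}"

definition unit_sphere :: "nat \<Rightarrow> (nat \<Rightarrow> real) set" where
  "unit_sphere n = {x \<in> euc n. dot n x x = 1}"

lemma dot_comm: "dot n x y = dot n y x"
  unfolding dot_def by (simp add: mult.commute)

lemma dot_cong:
  "(\<And>i. i < n \<Longrightarrow> x i = x' i) \<Longrightarrow> (\<And>i. i < n \<Longrightarrow> y i = y' i) \<Longrightarrow> dot n x y = dot n x' y'"
  unfolding dot_def by (intro sum.cong) auto

lemma dot_Suc: "dot (Suc n) x y = dot n x y + x n * y n"
  unfolding dot_def by simp

lemma dot_unit_vec: "j < n \<Longrightarrow> dot n a (unit_vec j) = a j"
  unfolding dot_def unit_vec_def by (simp add: if_distrib cong: if_cong)

lemma dot_diff_left: "dot n (\<lambda>i. x i - y i) z = dot n x z - dot n y z"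
  unfolding dot_def by (simp add: algebra_simps sum_subtractf)

lemma dot_diff_scale_right: "dot n a (\<lambda>i. x i - c * w i) = dot n a x - c * dot n a w"
  unfolding dot_def by (simp add: algebra_simps sum_subtractf sum_distrib_left)

lemma dot_divide_right: "dot n a (\<lambda>i. y i / e) = dot n a y / e"
  unfolding dot_def by (simp add: sum_divide_distrib)

lemma dot_line_point: "dot n a (line_point x t v) = dot n a x + t * dot n a v"
  unfolding dot_def line_point_def by (simp add: algebra_simps sum.distrib sum_distrib_left)

lemma dot_line_point_self:
  "dot n (line_point x t v) (line_point x t v) = dot n x x + 2 * t * dot n x v + t\<^sup>2 * dot n v v"
  unfolding dot_def line_point_def
  by (simp add: algebra_simps sum.distrib sum_distrib_left power2_eq_square)

lemma dot_self_nonneg: "dot n x x \<ge> 0"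
  unfolding dot_def by (intro sum_nonneg) auto

lemma dot_self_pos_iff: "dot n v v > 0 \<longleftrightarrow> (\<exists>i<n. v i \<noteq> 0)"
proof
  assume "dot n v v > 0"
  then show "\<exists>i<n. v i \<noteq> 0"
    unfolding dot_def
    by (metis (no_types, lifting) lessThan_iff mult_zero_left order_less_irrefl sum.neutral)
next
  assume "\<exists>i<n. v i \<noteq> 0"
  then obtain i where i: "i < n" "v i \<noteq> 0" by blast
  have "0 < v i * v i" using i(2) by (metis not_real_square_gt_zero)
  also have "\<dots> \<le> (\<Sum>j<n. v j * v j)" using i by (intro member_le_sum) auto
  finally show "dot n v v > 0" unfolding dot_def .
qed

lemma dot_eq_0_if_dot_self_eq_0: "dot n w w = 0 \<Longrightarrow> dot n w x = 0"
  using dot_self_pos_iff[of n w] dot_self_nonneg[of n w] unfolding dot_def by auto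

lemma enorm_eq_sqrt_dot: "enorm n x = sqrt (dot n x x)"
  unfolding enorm_def dot_def by (simp add: power2_eq_square)

lemma line_point_euc: "x \<in> euc n \<Longrightarrow> v \<in> euc n \<Longrightarrow> line_point x t v \<in> euc n"
  unfolding euc_def line_point_def by auto

lemma unit_vec_euc: "j < n \<Longrightarrow> unit_vec j \<in> euc n"
  unfolding euc_def unit_vec_def by auto

lemma disc_eq: "disc d = {x \<in> euc (Suc d). dot (Suc d) x x \<le> 1}"
  unfolding disc_def enorm_eq_sqrt_dot by auto

lemma disc_interior_eq: "disc_interior d = {x \<in> euc (Suc d). dot (Suc d) x x < 1}"
  unfolding disc_interior_def enorm_eq_sqrt_dot by auto

lemma unit_sphere_subset_disc: "unit_sphere (Suc d) \<subseteq> disc d"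
  unfolding unit_sphere_def disc_eq by auto

lemma unit_sphere_eq_unit_vec:
  assumes "x \<in> unit_sphere (Suc d)" "x d = 1"
  shows "x = unit_vec d"
proof
  fix i
  have "dot d x x = 0"
    using assms unfolding unit_sphere_def dot_Suc by simp
  then have "x i = 0" if "i < d"
    using that dot_self_pos_iff[of d x] by auto
  moreover have "x i = 0" if "d < i"
    using assms that unfolding unit_sphere_def euc_def by simp
  ultimately show "x i = unit_vec d i"
    using assms(2) unfolding unit_vec_def by (cases i d rule: linorder_cases) auto
qed


lemma unit_vec_in_unit_sphere: "unit_vec d \<in> unit_sphere (Suc d)"
  using dot_unit_vec[of d "Suc d" "unit_vec d"] unit_vec_euc[of d "Suc d"]
  unfolding unit_sphere_def by (simp add: unit_vec_def)

lemma quadratic_nonpos_iff_between_roots: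
  fixes A B C :: real
  assumes A: "A > 0" and C: "C < 0"
  obtains t1 t2 where "t1 < t2" "\<And>\<mu>. A * \<mu>\<^sup>2 + 2 * B * \<mu> + C \<le> 0 \<longleftrightarrow> t1 \<le> \<mu> \<and> \<mu> \<le> t2"
    "A * t1\<^sup>2 + 2 * B * t1 + C = 0" "A * t2\<^sup>2 + 2 * B * t2 + C = 0"
proof -
  define s where "s = sqrt (B\<^sup>2 - A * C)"
  have "B\<^sup>2 - A * C > 0" using A C by (smt (verit) mult_pos_neg zero_le_power2)
  then have s: "s > 0" "s\<^sup>2 = B\<^sup>2 - A * C" unfolding s_def by auto
  define t1 where "t1 = (- B - s) / A"
  define t2 where "t2 = (- B + s) / A"
  have "t1 < t2" unfolding t1_def t2_def using A s by (simp add: divide_strict_right_mono)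
  have factor: "A * \<mu>\<^sup>2 + 2 * B * \<mu> + C = A * ((\<mu> - t1) * (\<mu> - t2))" for \<mu>
  proof -
    have "A * ((\<mu> - t1) * (\<mu> - t2)) = A * \<mu>\<^sup>2 - A * (t1 + t2) * \<mu> + A * t1 * t2"
      by (simp add: algebra_simps power2_eq_square)
    also have "A * (t1 + t2) = - 2 * B" unfolding t1_def t2_def using A by (simp add: field_simps)
    also have "A * t1 * t2 = (B\<^sup>2 - s\<^sup>2) / A" unfolding t1_def t2_def using A
      by (simp add: field_simps power2_eq_square)
    also have "(B\<^sup>2 - s\<^sup>2) / A = C" using s A by (simp add: field_simps)
    finally show ?thesis by simp
  qed
  show thesis
  proof (rule that[OF \<open>t1 < t2\<close>])
    show "A * \<mu>\<^sup>2 + 2 * B * \<mu> + C \<le> 0 \<longleftrightarrow> t1 \<le> \<mu> \<and> \<mu> \<le> t2" for \<mu>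
      unfolding factor using A \<open>t1 < t2\<close> by (auto simp: mult_le_0_iff)
  qed (simp_all add: factor)
qed

lemma line_meets_sphere_twice:
  assumes "dot n x x < 1" "dot n v v > 0"
  obtains t1 t2 where "t1 < t2"
    "\<And>\<mu>. dot n (line_point x \<mu> v) (line_point x \<mu> v) \<le> 1 \<longleftrightarrow> t1 \<le> \<mu> \<and> \<mu> \<le> t2"
    "dot n (line_point x t1 v) (line_point x t1 v) = 1"
    "dot n (line_point x t2 v) (line_point x t2 v) = 1"
proof -
  obtain t1 t2 where "t1 < t2"
    "\<And>\<mu>. dot n v v * \<mu>\<^sup>2 + 2 * dot n x v * \<mu> + (dot n x x - 1) \<le> 0 \<longleftrightarrow> t1 \<le> \<mu> \<and> \<mu> \<le> t2"
    "dot n v v * t1\<^sup>2 + 2 * dot n x v * t1 + (dot n x x - 1) = 0"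
    "dot n v v * t2\<^sup>2 + 2 * dot n x v * t2 + (dot n x x - 1) = 0"
    using quadratic_nonpos_iff_between_roots[of "dot n v v" "dot n x x - 1" "dot n x v"] assms
    by auto
  then show thesis
    using that[of t1 t2] unfolding dot_line_point_self by (auto simp: algebra_simps)
qed

lemma line_meets_sphere:
  assumes "dot n x x \<le> 1" "dot n v v > 0"
  obtains t where "dot n (line_point x t v) (line_point x t v) = 1"
proof (cases "dot n x x = 1")
  case True
  then show thesis using that[of 0] by (simp add: line_point_def)
next
  case False
  then show thesis using line_meets_sphere_twice[of n x v] assms that by force
qed

lemma dot_lincomb_right: "dot n a (\<lambda>k. \<alpha> * x k + \<beta> * y k) = \<alpha> * dot n a x + \<beta> * dot n a y"
  unfolding dot_def by (simp add: algebra_simps sum.distrib sum_distrib_left)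

definition coord_orth :: "(nat \<Rightarrow> real) \<Rightarrow> nat \<Rightarrow> nat \<Rightarrow> (nat \<Rightarrow> real)" where
  "coord_orth a i j = (\<lambda>l. a j * unit_vec i l + (- a i) * unit_vec j l)"

lemma coord_orth:
  assumes "i < n" "j < n" "i \<noteq> j"
  shows "coord_orth a i j \<in> euc n" "dot n a (coord_orth a i j) = 0" "coord_orth a i j j = - a i"
    "k \<noteq> i \<Longrightarrow> k \<noteq> j \<Longrightarrow> coord_orth a i j k = 0"
proof -
  show "dot n a (coord_orth a i j) = 0"
    unfolding coord_orth_def dot_lincomb_right using assms by (simp add: dot_unit_vec)
qed (use assms in \<open>auto simp: coord_orth_def euc_def unit_vec_def\<close>)

lemma exists_orthogonal:
  assumes "n \<ge> 2" "i < n" "a i \<noteq> 0"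
  obtains v where "v \<in> euc n" "dot n v v > 0" "dot n a v = 0"
proof -
  define j where "j = (if i = 0 then 1 else (0::nat))"
  have j: "j < n" "j \<noteq> i" using assms unfolding j_def by auto
  have "coord_orth a i j j \<noteq> 0" using coord_orth(3)[OF assms(2) j(1)] j(2) assms(3) by simp
  then have "dot n (coord_orth a i j) (coord_orth a i j) > 0" using j(1) dot_self_pos_iff by blast
  then show thesis using that coord_orth(1,2)[OF assms(2) j(1)] j(2) by blast
qed

lemma exists_orthogonal_to_two_of_nonzero:
  assumes "n \<ge> 3" "i < n" "a1 i \<noteq> 0"
  obtains v where "v \<in> euc n" "dot n v v > 0" "dot n a1 v = 0" "dot n a2 v = 0"
proof -
  obtain j k where jk: "j < n" "k < n" "j \<noteq> i" "k \<noteq> i" "j \<noteq> k"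
  proof -
    consider "i = 0" | "i = 1" | "i \<noteq> 0" "i \<noteq> 1" by blast
    then show thesis
      by cases (use assms that[of 1 2] that[of 0 2] that[of 0 1] in auto)
  qed
  define w1 where "w1 = coord_orth a1 i j"
  define w2 where "w2 = coord_orth a1 i k"
  have w: "w1 \<in> euc n" "w2 \<in> euc n" "dot n a1 w1 = 0" "dot n a1 w2 = 0"
    "w1 j = - a1 i" "w1 k = 0" "w2 k = - a1 i"
    unfolding w1_def w2_def using coord_orth[where a = a1, OF assms(2)] jk by auto
  define \<alpha> where "\<alpha> = dot n a2 w1"
  define \<beta> where "\<beta> = dot n a2 w2"
  show thesis
  proof (cases "\<alpha> = 0")
    case True
    have "w1 j \<noteq> 0" using w(5) assms(3) by simp
    then have "dot n w1 w1 > 0" using jk(1) dot_self_pos_iff by blast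
    then show thesis using w True that unfolding \<alpha>_def by blast
  next
    case False
    define v where "v = (\<lambda>l. \<beta> * w1 l + (- \<alpha>) * w2 l)"
    have "v k \<noteq> 0" unfolding v_def using w assms False by simp
    then have "dot n v v > 0" using jk dot_self_pos_iff by blast
    moreover have "v \<in> euc n" using w unfolding v_def euc_def by auto
    moreover have "dot n a1 v = 0" "dot n a2 v = 0"
      unfolding v_def dot_lincomb_right \<alpha>_def \<beta>_def using w by simp_all
    ultimately show thesis using that by blast
  qed
qed

lemma exists_orthogonal_to_two:
  assumes "n \<ge> 3"
  obtains v where "v \<in> euc n" "dot n v v > 0" "dot n a1 v = 0" "dot n a2 v = 0"
proof -
  consider i where "i < n" "a1 i \<noteq> 0" | i where "i < n" "a2 i \<noteq> 0"
    | "\<forall>i<n. a1 i = 0 \<and> a2 i = 0" by blast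
  then show thesis
  proof cases
    case (1 i)
    then show thesis using exists_orthogonal_to_two_of_nonzero[OF assms] that by blast
  next
    case (2 i)
    then show thesis using exists_orthogonal_to_two_of_nonzero[OF assms, of i a2 a1] that by blast
  next
    case 3
    then have "dot n a1 v = 0" "dot n a2 v = 0" for v unfolding dot_def by simp_all
    moreover have "unit_vec 0 \<in> euc n" using assms by (intro unit_vec_euc) auto
    moreover have "dot n (unit_vec 0) (unit_vec 0) > 0"
      using assms dot_unit_vec[of 0 n "unit_vec 0"] by (simp add: unit_vec_def)
    ultimately show thesis using that by blast
  qed
qed

lemma hyperplane_meets_open_ball_iff:
  assumes "\<exists>i<n. a i \<noteq> 0"
  shows "(\<exists>x\<in>euc n. dot n x x < 1 \<and> dot n a x = b) \<longleftrightarrow> b\<^sup>2 < dot n a a"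
proof
  assume "\<exists>x\<in>euc n. dot n x x < 1 \<and> dot n a x = b"
  then obtain x where x: "dot n x x < 1" "dot n a x = b" by blast
  have "b\<^sup>2 \<le> dot n a a * dot n x x"
    using Cauchy_Schwarz_ineq_sum[of a x "{..<n}"] x(2) unfolding dot_def by (simp add: power2_eq_square)
  also have "\<dots> < dot n a a" using assms dot_self_pos_iff x(1) by simp
  finally show "b\<^sup>2 < dot n a a" .
next
  assume ab: "b\<^sup>2 < dot n a a"
  define D where "D = dot n a a"
  have D: "D > 0" using ab unfolding D_def by (smt (verit) zero_le_power2)
  have sum_D: "(\<Sum>i<n. a i * a i) = D" unfolding D_def dot_def ..
  define x where "x = (\<lambda>i. if i < n then b / D * a i else 0)"
  have "dot n a x = (\<Sum>i<n. b / D * (a i * a i))" unfolding x_def dot_def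
    by (intro sum.cong) auto
  also have "\<dots> = b" unfolding sum_distrib_left[symmetric] sum_D using D by simp
  finally have "dot n a x = b" .
  have "dot n x x = (\<Sum>i<n. (b / D)\<^sup>2 * (a i * a i))" unfolding x_def dot_def
    by (intro sum.cong) (auto simp: power2_eq_square)
  also have "\<dots> = b\<^sup>2 / D" unfolding sum_distrib_left[symmetric] sum_D using D
    by (simp add: power2_eq_square)
  also have "\<dots> < 1" using D ab unfolding D_def by simp
  finally have "dot n x x < 1" .
  moreover have "x \<in> euc n" unfolding x_def euc_def by auto
  ultimately show "\<exists>x\<in>euc n. dot n x x < 1 \<and> dot n a x = b" using \<open>dot n a x = b\<close> by blast
qed


subsection \<open>Hyperplane sections are determined by their traces on the sphere\<close>

lemma hyperplane_meets_sphere_in_codim_two: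
  assumes "n \<ge> 3" "x \<in> euc n" "dot n x x \<le> 1" "dot n a1 x = b1" "dot n a2 x = b2"
  obtains y where "y \<in> unit_sphere n" "dot n a1 y = b1" "dot n a2 y = b2"
proof -
  obtain v where v: "v \<in> euc n" "dot n v v > 0" "dot n a1 v = 0" "dot n a2 v = 0"
    using exists_orthogonal_to_two[OF assms(1)] by blast
  obtain t where "dot n (line_point x t v) (line_point x t v) = 1"
    using line_meets_sphere[OF assms(3) v(2)] by blast
  then have "line_point x t v \<in> unit_sphere n"
    unfolding unit_sphere_def using line_point_euc[OF assms(2) v(1)] by auto
  moreover have "dot n a1 (line_point x t v) = b1" "dot n a2 (line_point x t v) = b2"
    unfolding dot_line_point using v assms by auto
  ultimately show thesis by (rule that)
qed

text \<open>A chord of the ball through \<open>x\<close> inside the first hyperplane has two endpoints on the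
  sphere; an affine function vanishing at both vanishes along the whole chord.\<close>
lemma hyperplane_contains_ball_slice_if_contains_sphere_slice:
  assumes "n \<ge> 2" "x \<in> euc n" "dot n x x \<le> 1" "dot n a1 x = b1" "i < n" "a1 i \<noteq> 0"
    and sphere_slice: "\<And>y. y \<in> unit_sphere n \<Longrightarrow> dot n a1 y = b1 \<Longrightarrow> dot n a2 y = b2"
  shows "dot n a2 x = b2"
proof (cases "dot n x x = 1")
  case True
  then show ?thesis using sphere_slice assms unfolding unit_sphere_def by auto
next
  case False
  then have "dot n x x < 1" using assms by auto
  obtain v where v: "v \<in> euc n" "dot n v v > 0" "dot n a1 v = 0"
    using exists_orthogonal[of n i a1] assms by blast
  obtain t1 t2 where t: "t1 < t2" "dot n (line_point x t1 v) (line_point x t1 v) = 1"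
    "dot n (line_point x t2 v) (line_point x t2 v) = 1"
    using line_meets_sphere_twice[OF \<open>dot n x x < 1\<close> v(2)] by metis
  have "dot n a2 x + t * dot n a2 v = b2"
    if "dot n (line_point x t v) (line_point x t v) = 1" for t
  proof -
    have "line_point x t v \<in> unit_sphere n"
      unfolding unit_sphere_def using that line_point_euc[OF assms(2) v(1)] by auto
    from sphere_slice[OF this] show ?thesis unfolding dot_line_point using v assms by auto
  qed
  from this[OF t(2)] this[OF t(3)] have "t1 * dot n a2 v = t2 * dot n a2 v" by linarith
  then have "dot n a2 v = 0" using t(1) by simp
  then show ?thesis using \<open>dot n a2 x + t1 * dot n a2 v = b2\<close> t(2) by simp
qed

lemma hyp_sections_iff:
  "S \<in> hyp_sections d \<longleftrightarrow> (\<exists>a b. (\<exists>i<Suc d. a i \<noteq> 0) \<and> S = disc d \<inter> hplane (Suc d) a b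
      \<and> (\<exists>x\<in>euc (Suc d). dot (Suc d) x x < 1 \<and> dot (Suc d) a x = b))"
  unfolding hyp_sections_def is_hyperplane_def disc_interior_eq hplane_def dot_def by blast

lemma hyp_sectionsE:
  assumes "S \<in> hyp_sections d"
  obtains a b x where "\<exists>i<Suc d. a i \<noteq> 0" "S = disc d \<inter> hplane (Suc d) a b"
    "x \<in> euc (Suc d)" "dot (Suc d) x x < 1" "dot (Suc d) a x = b"
  using assms unfolding hyp_sections_iff by blast

lemma mem_hyp_section_on_sphere_iff:
  assumes "S = disc d \<inter> hplane (Suc d) a b" "z \<in> unit_sphere (Suc d)"
  shows "z \<in> S \<longleftrightarrow> dot (Suc d) a z = b"
  using assms unit_sphere_subset_disc[of d] unfolding hplane_def unit_sphere_def by auto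

lemma hyp_section_subset_if_sphere_trace_subset:
  assumes d: "d \<ge> 1" and A: "A \<in> hyp_sections d" and B: "B \<in> hyp_sections d"
    and trace: "A \<inter> unit_sphere (Suc d) \<subseteq> B"
  shows "A \<subseteq> B"
proof
  fix x assume "x \<in> A"
  obtain a1 b1 where A1: "\<exists>i<Suc d. a1 i \<noteq> 0" "A = disc d \<inter> hplane (Suc d) a1 b1"
    using hyp_sectionsE[OF A] by metis
  obtain a2 b2 where B2: "B = disc d \<inter> hplane (Suc d) a2 b2"
    using hyp_sectionsE[OF B] by metis
  obtain i where i: "i < Suc d" "a1 i \<noteq> 0" using A1 by blast
  have x: "x \<in> euc (Suc d)" "dot (Suc d) x x \<le> 1" "dot (Suc d) a1 x = b1"
    using \<open>x \<in> A\<close> A1(2) unfolding disc_eq hplane_def by auto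
  have "dot (Suc d) a2 x = b2"
  proof (rule hyperplane_contains_ball_slice_if_contains_sphere_slice[OF _ x i])
    fix y assume "y \<in> unit_sphere (Suc d)" "dot (Suc d) a1 y = b1"
    then show "dot (Suc d) a2 y = b2"
      using trace mem_hyp_section_on_sphere_iff[OF A1(2)] mem_hyp_section_on_sphere_iff[OF B2]
      by blast
  qed (use d in simp)
  then show "x \<in> B" using B2 x unfolding disc_eq hplane_def by auto
qed

lemma hyp_sections_meet_iff_meet_on_sphere:
  assumes d: "d \<ge> 2" and A: "A \<in> hyp_sections d" and B: "B \<in> hyp_sections d"
  shows "A \<inter> B \<noteq> {} \<longleftrightarrow> A \<inter> B \<inter> unit_sphere (Suc d) \<noteq> {}"
proof
  assume "A \<inter> B \<noteq> {}"
  then obtain x where "x \<in> A" "x \<in> B" by blast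
  obtain a1 b1 where A1: "A = disc d \<inter> hplane (Suc d) a1 b1"
    using hyp_sectionsE[OF A] by metis
  obtain a2 b2 where B2: "B = disc d \<inter> hplane (Suc d) a2 b2"
    using hyp_sectionsE[OF B] by metis
  have x: "x \<in> euc (Suc d)" "dot (Suc d) x x \<le> 1" "dot (Suc d) a1 x = b1" "dot (Suc d) a2 x = b2"
    using \<open>x \<in> A\<close> \<open>x \<in> B\<close> A1 B2 unfolding disc_eq hplane_def by auto
  obtain y where "y \<in> unit_sphere (Suc d)" "dot (Suc d) a1 y = b1" "dot (Suc d) a2 y = b2"
    using hyperplane_meets_sphere_in_codim_two[OF _ x] d by auto
  then show "A \<inter> B \<inter> unit_sphere (Suc d) \<noteq> {}"
    using mem_hyp_section_on_sphere_iff[OF A1] mem_hyp_section_on_sphere_iff[OF B2] by blast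
qed blast


subsection \<open>Stereographic projection\<close>

text \<open>The pole is \<open>unit_vec d\<close>, and \<open>R^d\<close> is the equatorial hyperplane \<open>x d = 0\<close>.\<close>
definition stereo :: "nat \<Rightarrow> (nat \<Rightarrow> real) \<Rightarrow> (nat \<Rightarrow> real)" where
  "stereo d x = (\<lambda>i. if i < d then x i / (1 - x d) else 0)"

definition stereo_inv :: "nat \<Rightarrow> (nat \<Rightarrow> real) \<Rightarrow> (nat \<Rightarrow> real)" where
  "stereo_inv d y = (\<lambda>i. if i < d then 2 * y i / (dot d y y + 1)
     else if i = d then (dot d y y - 1) / (dot d y y + 1) else 0)"

lemma dot_self_plus_1_pos: "dot d y y + 1 > 0"
  using dot_self_nonneg[of d y] by linarith

lemma dot_stereo_inv_trunc: "dot d a (stereo_inv d y) = 2 * dot d a y / (dot d y y + 1)"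
proof -
  have "dot d a (stereo_inv d y) = dot d a (\<lambda>i. 2 * y i / (dot d y y + 1))"
    by (rule dot_cong) (auto simp: stereo_inv_def)
  then show ?thesis unfolding dot_def by (simp add: sum_distrib_left sum_divide_distrib algebra_simps)
qed

lemma dot_stereo_inv:
  "dot (Suc d) a (stereo_inv d y) = (2 * dot d a y + a d * (dot d y y - 1)) / (dot d y y + 1)"
  unfolding dot_Suc dot_stereo_inv_trunc by (simp add: stereo_inv_def add_divide_distrib)

lemma stereo_inv_in_unit_sphere: "stereo_inv d y \<in> unit_sphere (Suc d)"
proof -
  define q where "q = dot d y y"
  have q: "q + 1 > 0" unfolding q_def by (rule dot_self_plus_1_pos)
  have "dot d (stereo_inv d y) (stereo_inv d y) = 2 * dot d (stereo_inv d y) y / (q + 1)"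
    unfolding q_def by (rule dot_stereo_inv_trunc)
  also have "dot d (stereo_inv d y) y = 2 * q / (q + 1)"
    unfolding q_def by (subst dot_comm) (rule dot_stereo_inv_trunc)
  finally have "dot (Suc d) (stereo_inv d y) (stereo_inv d y) = 4 * q / (q + 1)\<^sup>2 + ((q - 1) / (q + 1))\<^sup>2"
    unfolding dot_Suc by (simp add: stereo_inv_def q_def power2_eq_square)
  also have "\<dots> = (4 * q + (q - 1)\<^sup>2) / (q + 1)\<^sup>2" by (simp add: power_divide add_divide_distrib)
  also have "4 * q + (q - 1)\<^sup>2 = (q + 1)\<^sup>2" by (simp add: power2_eq_square algebra_simps)
  finally show ?thesis using q unfolding unit_sphere_def euc_def by (simp add: stereo_inv_def)
qed

lemma stereo_euc: "stereo d x \<in> euc d"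
  unfolding stereo_def euc_def by auto

lemma stereo_inv_stereo:
  assumes x: "x \<in> unit_sphere (Suc d)" and pole: "x d \<noteq> 1"
  shows "stereo_inv d (stereo d x) = x"
proof
  fix i
  define m where "m = 1 - x d"
  have m: "m \<noteq> 0" using pole unfolding m_def by simp
  have "dot d x x = 1 - (x d)\<^sup>2"
    using x unfolding unit_sphere_def dot_Suc by (simp add: power2_eq_square)
  also have "\<dots> = (1 + x d) * m" unfolding m_def by (simp add: algebra_simps power2_eq_square)
  finally have xx: "dot d x x = (1 + x d) * m" .
  have "dot d (stereo d x) (stereo d x) = dot d (\<lambda>i. x i / m) (\<lambda>i. x i / m)"
    by (rule dot_cong) (auto simp: stereo_def m_def)
  also have "\<dots> = dot d (\<lambda>i. x i / m) x / m" by (rule dot_divide_right)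
  also have "dot d (\<lambda>i. x i / m) x = dot d x x / m" by (subst dot_comm) (rule dot_divide_right)
  finally have q: "dot d (stereo d x) (stereo d x) = (1 + x d) / m" using m xx by simp
  have q1: "dot d (stereo d x) (stereo d x) + 1 = 2 / m"
    unfolding q using m by (simp add: m_def field_simps)
  show "stereo_inv d (stereo d x) i = x i"
  proof (cases i d rule: linorder_cases)
    case less
    then show ?thesis unfolding stereo_inv_def q1 using m by (simp add: stereo_def m_def[symmetric])
  next
    case equal
    then show ?thesis unfolding stereo_inv_def q1 q using m by (simp add: m_def field_simps)
  next
    case greater
    then show ?thesis using x by (simp add: stereo_inv_def unit_sphere_def euc_def)
  qed
qed


lemma stereo_inv_in_hyperplane_iff:
  assumes "a d \<noteq> b"
  shows "dot (Suc d) a (stereo_inv d y) = b \<longleftrightarrow>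
    dot d (\<lambda>i. y i + a i / (a d - b)) (\<lambda>i. y i + a i / (a d - b)) = (dot (Suc d) a a - b\<^sup>2) / (a d - b)\<^sup>2"
proof -
  define k where "k = a d - b"
  define q where "q = dot d y y"
  define A where "A = dot d a y"
  define Aa where "Aa = dot d a a"
  have k: "k \<noteq> 0" using assms unfolding k_def by simp
  have "dot d (\<lambda>i. y i + a i / k) (\<lambda>i. y i + a i / k) =
        (\<Sum>i<d. y i * y i + 2 * (a i * y i) / k + (a i * a i) / k\<^sup>2)"
    unfolding dot_def by (intro sum.cong refl) (use k in \<open>simp add: field_simps power2_eq_square\<close>)
  also have "\<dots> = q + 2 * A / k + Aa / k\<^sup>2"
    unfolding q_def A_def Aa_def dot_def by (simp add: sum.distrib sum_divide_distrib sum_distrib_left)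
  finally have lhs: "dot d (\<lambda>i. y i + a i / k) (\<lambda>i. y i + a i / k) = q + 2 * A / k + Aa / k\<^sup>2" .
  have "dot (Suc d) a (stereo_inv d y) = b \<longleftrightarrow> 2 * A + a d * (q - 1) = b * (q + 1)"
    unfolding dot_stereo_inv A_def q_def using dot_self_plus_1_pos[of d y] by (simp add: divide_eq_eq)
  also have "\<dots> \<longleftrightarrow> k * q + 2 * A - (a d + b) = 0"
    unfolding k_def by (simp add: algebra_simps)
  also have "\<dots> \<longleftrightarrow> k * (k * q + 2 * A - (a d + b)) = 0"
    using k by simp
  also have "\<dots> \<longleftrightarrow> k\<^sup>2 * (q + 2 * A / k + Aa / k\<^sup>2) = Aa + (a d)\<^sup>2 - b\<^sup>2"
  proof -
    have "k\<^sup>2 * (q + 2 * A / k + Aa / k\<^sup>2) = k\<^sup>2 * q + 2 * A * k + Aa"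
      using k by (simp add: field_simps power2_eq_square)
    moreover have "k * (k * q + 2 * A - (a d + b)) = k\<^sup>2 * q + 2 * A * k - ((a d)\<^sup>2 - b\<^sup>2)"
      unfolding k_def by (simp add: algebra_simps power2_eq_square)
    ultimately show ?thesis by linarith
  qed
  also have "\<dots> \<longleftrightarrow> q + 2 * A / k + Aa / k\<^sup>2 = (dot (Suc d) a a - b\<^sup>2) / k\<^sup>2"
    using k unfolding Aa_def dot_Suc by (simp add: eq_divide_eq mult.commute power2_eq_square)
  finally show ?thesis using lhs unfolding k_def by simp
qed

lemma stereo_inv_preimage_in_spheres:
  assumes "a d \<noteq> b" and "b\<^sup>2 < dot (Suc d) a a"
  shows "{y \<in> euc d. dot (Suc d) a (stereo_inv d y) = b} \<in> spheres d"
proof -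
  define k where "k = a d - b"
  have k: "k \<noteq> 0" using assms unfolding k_def by simp
  define c where "c = (\<lambda>i. if i < d then - a i / k else 0)"
  define r where "r = sqrt ((dot (Suc d) a a - b\<^sup>2) / k\<^sup>2)"
  have "r > 0" unfolding r_def using assms k by simp
  moreover have "c \<in> euc d" unfolding c_def euc_def by auto
  moreover have "{y \<in> euc d. dot (Suc d) a (stereo_inv d y) = b}
      = {y \<in> euc d. enorm d (\<lambda>i. y i - c i) = r}"
  proof (intro Collect_cong conj_cong refl)
    have "dot d (\<lambda>i. y i - c i) (\<lambda>i. y i - c i) = dot d (\<lambda>i. y i + a i / k) (\<lambda>i. y i + a i / k)" for y
      by (rule dot_cong) (auto simp: c_def)
    then show "dot (Suc d) a (stereo_inv d y) = b \<longleftrightarrow> enorm d (\<lambda>i. y i - c i) = r" for y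
      using stereo_inv_in_hyperplane_iff[of a d b y] assms(1)
      unfolding enorm_eq_sqrt_dot r_def k_def real_sqrt_eq_iff by simp
  qed
  ultimately show ?thesis unfolding spheres_def by blast
qed

text \<open>The hyperplane \<open>dot (sphere_normal d c r) x = sphere_offset d c r\<close> is chosen so that
  \<open>a d - b = 1\<close>, the centre is \<open>-a\<close> restricted to \<open>R^d\<close> and \<open>dot a a - b\<^sup>2 = r\<^sup>2\<close>.\<close>
definition sphere_normal :: "nat \<Rightarrow> (nat \<Rightarrow> real) \<Rightarrow> real \<Rightarrow> (nat \<Rightarrow> real)" where
  "sphere_normal d c r =
     (\<lambda>i. if i < d then - c i else if i = d then (1 + r\<^sup>2 - dot d c c) / 2 else 0)"

definition sphere_offset :: "nat \<Rightarrow> (nat \<Rightarrow> real) \<Rightarrow> real \<Rightarrow> real" where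
  "sphere_offset d c r = (r\<^sup>2 - dot d c c - 1) / 2"

lemma sphere_normal_pole: "sphere_normal d c r d - sphere_offset d c r = 1"
  unfolding sphere_normal_def sphere_offset_def by (simp add: field_simps)

lemma dot_sphere_normal_minus_offset:
  "dot (Suc d) (sphere_normal d c r) (sphere_normal d c r) - (sphere_offset d c r)\<^sup>2 = r\<^sup>2"
proof -
  let ?a = "sphere_normal d c r" and ?b = "sphere_offset d c r"
  have "dot d ?a ?a = dot d (\<lambda>i. - c i) (\<lambda>i. - c i)" by (rule dot_cong) (auto simp: sphere_normal_def)
  then have "dot d ?a ?a = dot d c c" by (simp add: dot_def)
  moreover have "(?a d)\<^sup>2 - ?b\<^sup>2 = (?a d - ?b) * (?a d + ?b)" by (simp add: algebra_simps power2_eq_square)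
  moreover have "?a d + ?b = r\<^sup>2 - dot d c c" unfolding sphere_normal_def sphere_offset_def by (simp add: field_simps)
  ultimately show ?thesis unfolding dot_Suc sphere_normal_pole by (simp add: power2_eq_square)
qed

lemma stereo_inv_in_sphere_hyperplane_iff:
  assumes "r > 0"
  shows "dot (Suc d) (sphere_normal d c r) (stereo_inv d y) = sphere_offset d c r
     \<longleftrightarrow> enorm d (\<lambda>i. y i - c i) = r"
proof -
  let ?a = "sphere_normal d c r" and ?b = "sphere_offset d c r"
  have "dot (Suc d) ?a (stereo_inv d y) = ?b \<longleftrightarrow> dot d (\<lambda>i. y i + ?a i) (\<lambda>i. y i + ?a i) = r\<^sup>2"
    using stereo_inv_in_hyperplane_iff[of ?a d ?b y] sphere_normal_pole[of d c r]
      dot_sphere_normal_minus_offset[of d c r] by simp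
  also have "dot d (\<lambda>i. y i + ?a i) (\<lambda>i. y i + ?a i) = dot d (\<lambda>i. y i - c i) (\<lambda>i. y i - c i)"
    by (rule dot_cong; simp add: sphere_normal_def)+
  also have "\<dots> = r\<^sup>2 \<longleftrightarrow> sqrt (dot d (\<lambda>i. y i - c i) (\<lambda>i. y i - c i)) = sqrt (r\<^sup>2)"
    by (rule real_sqrt_eq_iff[symmetric])
  finally show ?thesis unfolding enorm_eq_sqrt_dot using assms by simp
qed


subsection \<open>A pole avoiding countably many sections\<close>

definition moment_curve :: "nat \<Rightarrow> real \<Rightarrow> (nat \<Rightarrow> real)" where
  "moment_curve d t = (\<lambda>i. if i < d then t ^ Suc i else 0)"

text \<open>After clearing the denominator \<open>dot d y y + 1\<close>, the equation
  \<open>dot (Suc d) a (stereo_inv d (moment_curve d t)) = b\<close> becomes \<open>poly (moment_poly d a b) t = 0\<close>.\<close>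
definition moment_poly :: "nat \<Rightarrow> (nat \<Rightarrow> real) \<Rightarrow> real \<Rightarrow> real poly" where
  "moment_poly d a b = (\<Sum>i<d. monom (2 * a i) (Suc i)) + (\<Sum>i<d. monom (a d - b) (2 * Suc i))
     + [:- (a d + b):]"

lemma poly_moment_poly:
  "poly (moment_poly d a b) t = 2 * dot d a (moment_curve d t)
     + (a d - b) * dot d (moment_curve d t) (moment_curve d t) - (a d + b)"
proof -
  have "dot d a (moment_curve d t) = (\<Sum>i<d. a i * t ^ Suc i)"
    unfolding dot_def moment_curve_def by simp
  moreover have "dot d (moment_curve d t) (moment_curve d t) = (\<Sum>i<d. t ^ (2 * Suc i))"
    unfolding dot_def moment_curve_def by (intro sum.cong refl) (simp add: mult_2 power_add)
  ultimately show ?thesis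
    unfolding moment_poly_def by (simp add: poly_sum poly_monom sum_distrib_left mult.assoc)
qed

lemma coeff_moment_poly:
  "coeff (moment_poly d a b) n = (\<Sum>i<d. if Suc i = n then 2 * a i else 0)
     + (\<Sum>i<d. if 2 * Suc i = n then a d - b else 0) + (if n = 0 then - (a d + b) else 0)"
  unfolding moment_poly_def coeff_add coeff_sum coeff_monom coeff_pCons' by simp

lemma moment_poly_nonzero:
  assumes "d \<ge> 1" "\<exists>i<Suc d. a i \<noteq> 0"
  shows "moment_poly d a b \<noteq> 0"
proof (cases "a d = b")
  case False
  have "(\<Sum>i<d. if 2 * Suc i = 2 * d then a d - b else 0) = (\<Sum>i<d. if i = d - 1 then a d - b else 0)"
    using assms(1) by (intro sum.cong refl) auto
  then have "coeff (moment_poly d a b) (2 * d) = a d - b"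
    unfolding coeff_moment_poly using assms(1) by simp
  then show ?thesis using False by auto
next
  case True
  show ?thesis
  proof (cases "a d + b = 0")
    case False
    have "coeff (moment_poly d a b) 0 = - (a d + b)" unfolding coeff_moment_poly by simp
    then show ?thesis using False by auto
  next
    case ad: True
    obtain i where i: "i < Suc d" "a i \<noteq> 0" using assms by blast
    then have "i < d" using True ad by (cases "i = d") auto
    then have "coeff (moment_poly d a b) (Suc i) = 2 * a i"
      unfolding coeff_moment_poly using True by (simp cong: if_cong)
    then show ?thesis using i by auto
  qed
qed

lemma moment_curve_meets_hyperplane_finitely:
  assumes "d \<ge> 1" "\<exists>i<Suc d. a i \<noteq> 0"
  shows "finite {t. dot (Suc d) a (stereo_inv d (moment_curve d t)) = b}"
proof -
  have "dot (Suc d) a (stereo_inv d (moment_curve d t)) = b \<longleftrightarrow> poly (moment_poly d a b) t = 0" for t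
    unfolding dot_stereo_inv poly_moment_poly
    using dot_self_plus_1_pos[of d "moment_curve d t"] by (simp add: divide_eq_eq algebra_simps)
  then show ?thesis using poly_roots_finite[OF moment_poly_nonzero[OF assms]] by simp
qed

lemma exists_pole_avoiding_countable_sections:
  assumes d: "d \<ge> 1" and "countable \<S>" and "\<S> \<subseteq> hyp_sections d"
  obtains p where "p \<in> unit_sphere (Suc d)" "\<forall>S\<in>\<S>. p \<notin> S"
proof -
  let ?bad = "\<lambda>S. {t. stereo_inv d (moment_curve d t) \<in> S}"
  have "finite (?bad S)" if "S \<in> \<S>" for S
  proof -
    obtain a b where ab: "\<exists>i<Suc d. a i \<noteq> 0" "S = disc d \<inter> hplane (Suc d) a b"
      using hyp_sectionsE \<open>S \<in> \<S>\<close> assms(3) by (metis subsetD)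
    have "?bad S = {t. dot (Suc d) a (stereo_inv d (moment_curve d t)) = b}"
      using mem_hyp_section_on_sphere_iff[OF ab(2) stereo_inv_in_unit_sphere] by blast
    then show ?thesis using moment_curve_meets_hyperplane_finitely[OF d ab(1)] by simp
  qed
  then have "countable (\<Union>S\<in>\<S>. ?bad S)"
    using assms(2) by (intro countable_UN) (auto intro: countable_finite)
  then obtain t where "t \<notin> (\<Union>S\<in>\<S>. ?bad S)"
    using uncountable_UNIV_real by (metis UNIV_I subsetI subset_antisym)
  then show thesis using that stereo_inv_in_unit_sphere by blast
qed


text \<open>For \<open>dot n w w = 0\<close> the division by zero makes \<open>reflection n w\<close> the identity on \<open>euc n\<close>;
  all lemmas below hold without a non-degeneracy assumption.\<close>
definition reflection :: "nat \<Rightarrow> (nat \<Rightarrow> real) \<Rightarrow> (nat \<Rightarrow> real) \<Rightarrow> (nat \<Rightarrow> real)" where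
  "reflection n w x = (\<lambda>i. x i - 2 * dot n w x / dot n w w * w i)"

lemma reflection_euc: "w \<in> euc n \<Longrightarrow> x \<in> euc n \<Longrightarrow> reflection n w x \<in> euc n"
  unfolding reflection_def euc_def by auto

lemma dot_reflection: "dot n a (reflection n w x) = dot n a x - 2 * dot n w x / dot n w w * dot n a w"
  unfolding reflection_def by (rule dot_diff_scale_right)

lemma dot_reflection_swap: "dot n a (reflection n w x) = dot n (reflection n w a) x"
  unfolding dot_reflection by (subst (2) dot_comm) (simp add: dot_reflection dot_comm)

lemma reflection_involutive: "reflection n w (reflection n w x) = x"
proof (cases "dot n w w = 0")
  case True
  then show ?thesis
    using dot_eq_0_if_dot_self_eq_0[OF True] by (simp add: reflection_def)
next
  case False
  then have "dot n w (reflection n w x) = - dot n w x" unfolding dot_reflection by simp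
  then show ?thesis unfolding reflection_def[of n w "reflection n w x"] by (simp add: reflection_def fun_eq_iff)
qed

lemma dot_reflection_reflection: "dot n (reflection n w x) (reflection n w y) = dot n x y"
  using dot_reflection_swap[of n "reflection n w x" w y] by (simp add: reflection_involutive)

lemma reflection_in_unit_sphere:
  "w \<in> euc n \<Longrightarrow> x \<in> unit_sphere n \<Longrightarrow> reflection n w x \<in> unit_sphere n"
  using reflection_euc dot_reflection_reflection unfolding unit_sphere_def by auto

lemma reflection_pole_to_unit_vec:
  assumes p: "p \<in> unit_sphere (Suc d)"
  shows "reflection (Suc d) (\<lambda>i. p i - unit_vec d i) p = unit_vec d"
proof (cases "p d = 1")
  case True
  then have "(\<lambda>i. p i - unit_vec d i) = (\<lambda>i. 0)" using unit_sphere_eq_unit_vec[OF p] by simp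
  then show ?thesis using unit_sphere_eq_unit_vec[OF p True] by (simp add: reflection_def)
next
  case False
  define w where "w = (\<lambda>i. p i - unit_vec d i)"
  have pp: "dot (Suc d) p p = 1" using p unfolding unit_sphere_def by auto
  have ep: "dot (Suc d) (unit_vec d) p = p d" using dot_unit_vec[of d "Suc d" p] by (simp add: dot_comm)
  have ee: "dot (Suc d) (unit_vec d) (unit_vec d) = 1"
    using dot_unit_vec[of d "Suc d" "unit_vec d"] by (simp add: unit_vec_def)
  have wp: "dot (Suc d) w p = 1 - p d" unfolding w_def dot_diff_left pp ep ..
  have we: "dot (Suc d) w (unit_vec d) = p d - 1" unfolding w_def dot_diff_left ee
    using dot_comm[of "Suc d" p "unit_vec d"] ep by simp
  have "dot (Suc d) w w = dot (Suc d) w p - dot (Suc d) w (unit_vec d)"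
    by (subst (1) w_def) (simp add: dot_comm[of _ w] dot_diff_left)
  then have ww: "dot (Suc d) w w = 2 - 2 * p d" using wp we by simp
  have "(p d)\<^sup>2 \<le> 1"
    using pp dot_self_nonneg[of d p] unfolding dot_Suc by (simp add: power2_eq_square)
  then have "p d < 1" using False abs_square_le_1[of "p d"] by auto
  then have "2 * dot (Suc d) w p / dot (Suc d) w w = 1" unfolding wp ww by (simp add: field_simps)
  then show ?thesis unfolding w_def[symmetric] by (simp add: reflection_def w_def fun_eq_iff)
qed

text \<open>A parametrisation of the sphere minus \<open>p\<close> by \<open>R^d\<close>: the reflection swaps \<open>unit_vec d\<close> and \<open>p\<close>.\<close>
definition pole_chart :: "nat \<Rightarrow> (nat \<Rightarrow> real) \<Rightarrow> (nat \<Rightarrow> real) \<Rightarrow> (nat \<Rightarrow> real)" where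
  "pole_chart d p y = reflection (Suc d) (\<lambda>i. p i - unit_vec d i) (stereo_inv d y)"

definition pole_preimage :: "nat \<Rightarrow> (nat \<Rightarrow> real) \<Rightarrow> (nat \<Rightarrow> real) set \<Rightarrow> (nat \<Rightarrow> real) set" where
  "pole_preimage d p S = {y \<in> euc d. pole_chart d p y \<in> S}"

lemma pole_chart_unit_vec: "pole_chart d (unit_vec d) = stereo_inv d"
  by (simp add: pole_chart_def reflection_def dot_def fun_eq_iff)

context
  fixes d p
  assumes p: "p \<in> unit_sphere (Suc d)"
begin

private lemma pole_direction_euc: "(\<lambda>i. p i - unit_vec d i) \<in> euc (Suc d)"
  using p unfolding unit_sphere_def euc_def unit_vec_def by auto

lemma pole_chart_in_unit_sphere: "pole_chart d p y \<in> unit_sphere (Suc d)"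
  unfolding pole_chart_def
  by (intro reflection_in_unit_sphere pole_direction_euc stereo_inv_in_unit_sphere)

lemma pole_chart_image_pole_preimage:
  assumes "p \<notin> S"
  shows "pole_chart d p ` pole_preimage d p S = S \<inter> unit_sphere (Suc d)"
proof (intro equalityI subsetI)
  fix z assume "z \<in> pole_chart d p ` pole_preimage d p S"
  then show "z \<in> S \<inter> unit_sphere (Suc d)"
    unfolding pole_preimage_def using pole_chart_in_unit_sphere by auto
next
  fix z assume z: "z \<in> S \<inter> unit_sphere (Suc d)"
  let ?R = "reflection (Suc d) (\<lambda>i. p i - unit_vec d i)"
  have Rz: "?R z \<in> unit_sphere (Suc d)" using z by (intro reflection_in_unit_sphere pole_direction_euc) auto
  have "?R z d \<noteq> 1"
  proof
    assume "?R z d = 1"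
    then have "?R z = ?R p"
      using unit_sphere_eq_unit_vec[OF Rz] reflection_pole_to_unit_vec[OF p] by simp
    then have "z = p" by (metis reflection_involutive)
    then show False using z assms by blast
  qed
  then have "pole_chart d p (stereo d (?R z)) = z"
    unfolding pole_chart_def using stereo_inv_stereo[OF Rz] by (simp add: reflection_involutive)
  then show "z \<in> pole_chart d p ` pole_preimage d p S"
    unfolding pole_preimage_def using z stereo_euc by (metis (mono_tags, lifting) IntD1 image_eqI mem_Collect_eq)
qed

lemma pole_preimage_in_spheres:
  assumes S: "S \<in> hyp_sections d" and "p \<notin> S"
  shows "pole_preimage d p S \<in> spheres d"
proof -
  let ?R = "reflection (Suc d) (\<lambda>i. p i - unit_vec d i)"
  obtain a b x where ab: "\<exists>i<Suc d. a i \<noteq> 0" "S = disc d \<inter> hplane (Suc d) a b"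
    "x \<in> euc (Suc d)" "dot (Suc d) x x < 1" "dot (Suc d) a x = b"
    using hyp_sectionsE[OF S] by blast
  have "pole_preimage d p S = {y \<in> euc d. dot (Suc d) (?R a) (stereo_inv d y) = b}"
    unfolding pole_preimage_def pole_chart_def dot_reflection_swap[symmetric]
    using mem_hyp_section_on_sphere_iff[OF ab(2)] reflection_in_unit_sphere[OF pole_direction_euc]
      stereo_inv_in_unit_sphere by blast
  moreover have "?R a d \<noteq> b"
  proof -
    have "?R a d = dot (Suc d) a (?R (unit_vec d))"
      using dot_unit_vec[of d "Suc d" "?R a"] dot_reflection_swap by simp
    also have "?R (unit_vec d) = p"
      using reflection_pole_to_unit_vec[OF p] reflection_involutive by metis
    finally show ?thesis using mem_hyp_section_on_sphere_iff[OF ab(2) p] \<open>p \<notin> S\<close> by auto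
  qed
  moreover have "b\<^sup>2 < dot (Suc d) (?R a) (?R a)"
    using hyperplane_meets_open_ball_iff[OF ab(1)] ab(3-5) dot_reflection_reflection by auto
  ultimately show ?thesis using stereo_inv_preimage_in_spheres by simp
qed

lemma pole_preimage_inj:
  assumes "d \<ge> 1" "A \<in> hyp_sections d" "B \<in> hyp_sections d" "p \<notin> A" "p \<notin> B"
    and "pole_preimage d p A = pole_preimage d p B"
  shows "A = B"
proof -
  have "A \<inter> unit_sphere (Suc d) = B \<inter> unit_sphere (Suc d)"
    using assms pole_chart_image_pole_preimage by metis
  then show ?thesis
    using assms hyp_section_subset_if_sphere_trace_subset by (metis inf_le2 subset_antisym le_inf_iff order_refl)
qed

lemma pole_preimages_meet_iff:
  assumes "d \<ge> 2" "A \<in> hyp_sections d" "B \<in> hyp_sections d" "p \<notin> A"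
  shows "A \<inter> B \<noteq> {} \<longleftrightarrow> pole_preimage d p A \<inter> pole_preimage d p B \<noteq> {}"
proof -
  have "A \<inter> B \<noteq> {} \<longleftrightarrow> A \<inter> B \<inter> unit_sphere (Suc d) \<noteq> {}"
    using hyp_sections_meet_iff_meet_on_sphere assms by blast
  also have "\<dots> \<longleftrightarrow> pole_preimage d p A \<inter> pole_preimage d p B \<noteq> {}"
  proof
    assume "A \<inter> B \<inter> unit_sphere (Suc d) \<noteq> {}"
    then obtain z where z: "z \<in> A \<inter> unit_sphere (Suc d)" "z \<in> B" by blast
    then obtain y where "y \<in> pole_preimage d p A" "pole_chart d p y = z"
      using pole_chart_image_pole_preimage[OF assms(4)] by (metis imageE)
    with z(2) show "pole_preimage d p A \<inter> pole_preimage d p B \<noteq> {}"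
      unfolding pole_preimage_def by blast
  next
    assume "pole_preimage d p A \<inter> pole_preimage d p B \<noteq> {}"
    then show "A \<inter> B \<inter> unit_sphere (Suc d) \<noteq> {}"
      unfolding pole_preimage_def using pole_chart_in_unit_sphere by blast
  qed
  finally show ?thesis .
qed

end


definition intersection_embedding :: "('a set \<Rightarrow> 'b set) \<Rightarrow> 'a set set \<Rightarrow> 'b set set \<Rightarrow> bool" where
  "intersection_embedding g \<A> F \<longleftrightarrow>
     inj_on g \<A> \<and> g ` \<A> \<subseteq> F \<and> (\<forall>A\<in>\<A>. \<forall>B\<in>\<A>. A \<inter> B \<noteq> {} \<longleftrightarrow> g A \<inter> g B \<noteq> {})"

lemma is_intersection_graph_of_transfer:
  assumes "is_intersection_graph_of F V E" "countable V"
    and "\<And>\<A>. \<A> \<subseteq> F \<Longrightarrow> countable \<A> \<Longrightarrow> \<exists>g. intersection_embedding g \<A> F'"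
  shows "is_intersection_graph_of F' V E"
proof -
  obtain f where f: "inj_on f V" "f ` V \<subseteq> F"
    "\<forall>u\<in>V. \<forall>v\<in>V. u \<noteq> v \<longrightarrow> (E u v \<longleftrightarrow> f u \<inter> f v \<noteq> {})"
    using assms(1) unfolding is_intersection_graph_of_def by (elim exE conjE) (rule that)
  obtain g where g: "inj_on g (f ` V)" "g ` f ` V \<subseteq> F'"
    "\<forall>A\<in>f ` V. \<forall>B\<in>f ` V. A \<inter> B \<noteq> {} \<longleftrightarrow> g A \<inter> g B \<noteq> {}"
    using assms(3)[OF f(2) countable_image[OF assms(2)]] unfolding intersection_embedding_def
    by (elim exE conjE) (rule that)
  have "inj_on (g \<circ> f) V" using f(1) g(1) by (rule comp_inj_on)
  moreover have "(g \<circ> f) ` V \<subseteq> F'" using g(2) by auto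
  moreover have "\<forall>u\<in>V. \<forall>v\<in>V. u \<noteq> v \<longrightarrow> (E u v \<longleftrightarrow> (g \<circ> f) u \<inter> (g \<circ> f) v \<noteq> {})"
    using f(3) g(3) by simp
  ultimately show ?thesis unfolding is_intersection_graph_of_def by blast
qed

lemma image_intersection_embedding:
  assumes "inj f" "\<And>A. A \<in> \<A> \<Longrightarrow> f ` A \<in> F"
  shows "intersection_embedding (image f) \<A> F"
  unfolding intersection_embedding_def
proof (intro conjI inj_onI subsetI ballI)
  show "A = B" if "f ` A = f ` B" for A B
    using that assms(1) by (simp add: inj_image_eq_iff)
  show "A \<inter> B \<noteq> {} \<longleftrightarrow> f ` A \<inter> f ` B \<noteq> {}" for A B
    using image_Int[OF assms(1)] by (metis image_is_empty)
qed (use assms(2) in blast)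

lemma vimage_intersection_embedding:
  assumes "\<And>A. A \<in> \<A> \<Longrightarrow> A \<subseteq> range f" "\<And>A. A \<in> \<A> \<Longrightarrow> f -` A \<in> F"
  shows "intersection_embedding (vimage f) \<A> F"
  unfolding intersection_embedding_def
proof (intro conjI inj_onI subsetI ballI)
  show "A = B" if "A \<in> \<A>" "B \<in> \<A>" "f -` A = f -` B" for A B
    using that assms(1) image_vimage_eq[of f A] image_vimage_eq[of f B] by (metis inf.absorb1)
  show "A \<inter> B \<noteq> {} \<longleftrightarrow> f -` A \<inter> f -` B \<noteq> {}" if "A \<in> \<A>" "B \<in> \<A>" for A B
    using that assms(1) by blast
qed (use assms(2) in blast)


subsection \<open>Sphere graphs in dimension at least two\<close>

lemma sphere_eq_pole_preimage:
  assumes "T \<in> spheres d"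
  obtains S where "S \<in> hyp_sections d" "unit_vec d \<notin> S" "pole_preimage d (unit_vec d) S = T"
proof -
  obtain c r where cr: "c \<in> euc d" "r > 0" "T = {y \<in> euc d. enorm d (\<lambda>i. y i - c i) = r}"
    using assms unfolding spheres_def by blast
  let ?a = "sphere_normal d c r" and ?b = "sphere_offset d c r"
  define S where "S = disc d \<inter> hplane (Suc d) ?a ?b"
  have ab: "?b\<^sup>2 < dot (Suc d) ?a ?a"
    using dot_sphere_normal_minus_offset[of d c r] cr(2) by (smt (verit) zero_less_power)
  then have "\<exists>i<Suc d. ?a i \<noteq> 0"
    using dot_self_pos_iff by (metis le_less_trans zero_le_power2)
  with ab have "S \<in> hyp_sections d"
    unfolding hyp_sections_iff S_def using hyperplane_meets_open_ball_iff by blast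
  moreover have "unit_vec d \<notin> S"
    using mem_hyp_section_on_sphere_iff[OF S_def unit_vec_in_unit_sphere] sphere_normal_pole[of d c r]
      dot_unit_vec[of d "Suc d" ?a] by simp
  moreover have "pole_preimage d (unit_vec d) S = T"
    unfolding pole_preimage_def pole_chart_unit_vec cr(3)
    using mem_hyp_section_on_sphere_iff[OF S_def stereo_inv_in_unit_sphere]
      stereo_inv_in_sphere_hyperplane_iff[OF cr(2)] by blast
  ultimately show thesis by (rule that)
qed

lemma countable_hyp_sections_embed_in_spheres:
  assumes d: "d \<ge> 2" and "countable \<S>" and \<S>: "\<S> \<subseteq> hyp_sections d"
  obtains g where "intersection_embedding g \<S> (spheres d)"
proof -
  obtain p where p: "p \<in> unit_sphere (Suc d)" "\<forall>S\<in>\<S>. p \<notin> S"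
    using exists_pole_avoiding_countable_sections[OF _ assms(2,3)] d by auto
  have "intersection_embedding (pole_preimage d p) \<S> (spheres d)"
    unfolding intersection_embedding_def
  proof (intro conjI inj_onI subsetI ballI)
    show "A = B" if "A \<in> \<S>" "B \<in> \<S>" "pole_preimage d p A = pole_preimage d p B" for A B
      using pole_preimage_inj[OF p(1)] that d \<S> p(2) by (meson one_le_numeral order_trans subsetD)
    show "T \<in> spheres d" if "T \<in> pole_preimage d p ` \<S>" for T
      using that pole_preimage_in_spheres[OF p(1)] \<S> p(2) by blast
    show "A \<inter> B \<noteq> {} \<longleftrightarrow> pole_preimage d p A \<inter> pole_preimage d p B \<noteq> {}" if "A \<in> \<S>" "B \<in> \<S>" for A B
      using pole_preimages_meet_iff[OF p(1) d] that \<S> p(2) by blast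
  qed
  then show thesis by (rule that)
qed

lemma spheres_embed_in_hyp_sections:
  assumes d: "d \<ge> 2" and \<T>: "\<T> \<subseteq> spheres d"
  obtains g where "intersection_embedding g \<T> (hyp_sections d)"
proof -
  let ?e = "unit_vec d"
  have "\<forall>T\<in>\<T>. \<exists>S. S \<in> hyp_sections d \<and> ?e \<notin> S \<and> pole_preimage d ?e S = T"
    using sphere_eq_pole_preimage \<T> by (metis subsetD)
  then obtain h where h: "\<And>T. T \<in> \<T> \<Longrightarrow> h T \<in> hyp_sections d \<and> ?e \<notin> h T \<and> pole_preimage d ?e (h T) = T"
    by metis
  have "intersection_embedding h \<T> (hyp_sections d)"
    unfolding intersection_embedding_def
  proof (intro conjI inj_onI subsetI ballI)
    show "A = B" if "A \<in> \<T>" "B \<in> \<T>" "h A = h B" for A B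
      using h that by metis
    show "S \<in> hyp_sections d" if "S \<in> h ` \<T>" for S
      using h that by blast
    show "A \<inter> B \<noteq> {} \<longleftrightarrow> h A \<inter> h B \<noteq> {}" if "A \<in> \<T>" "B \<in> \<T>" for A B
      using pole_preimages_meet_iff[OF unit_vec_in_unit_sphere d, of "h A" "h B"] h that by simp
  qed
  then show thesis by (rule that)
qed

lemma hyp_sections_graph_iff_spheres_graph:
  assumes "d \<ge> 2" and "countable V"
  shows "is_intersection_graph_of (hyp_sections d) V E \<longleftrightarrow> is_intersection_graph_of (spheres d) V E"
  using is_intersection_graph_of_transfer[OF _ assms(2)]
    countable_hyp_sections_embed_in_spheres[OF assms(1)] spheres_embed_in_hyp_sections[OF assms(1)]
  by metis


subsection \<open>Circle graphs\<close>

definition vec_of_complex :: "complex \<Rightarrow> (nat \<Rightarrow> real)" where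
  "vec_of_complex z = (\<lambda>i. if i = 0 then Re z else if i = 1 then Im z else 0)"

definition complex_of_vec :: "(nat \<Rightarrow> real) \<Rightarrow> complex" where
  "complex_of_vec x = Complex (x 0) (x 1)"

lemma complex_of_vec_of_complex [simp]: "complex_of_vec (vec_of_complex z) = z"
  unfolding complex_of_vec_def vec_of_complex_def by (simp add: complex_eq_iff)

lemma vec_of_complex_euc: "vec_of_complex z \<in> euc 2"
  unfolding vec_of_complex_def euc_def by auto

lemma vec_of_complex_of_vec: "x \<in> euc 2 \<Longrightarrow> vec_of_complex (complex_of_vec x) = x"
  unfolding vec_of_complex_def complex_of_vec_def euc_def by (auto simp: fun_eq_iff)

lemma inj_vec_of_complex: "inj vec_of_complex"
  by (metis complex_of_vec_of_complex injI)

lemma dot_two: "dot 2 x y = x 0 * y 0 + x 1 * y 1"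
  unfolding dot_def by (simp add: numeral_2_eq_2)

lemma norm_complex_of_vec_squared: "(cmod (complex_of_vec x))\<^sup>2 = dot 2 x x"
  unfolding dot_two complex_of_vec_def cmod_def by (simp add: power2_eq_square)

lemma complex_of_vec_line_point:
  "complex_of_vec (line_point x t v) = complex_of_vec x + t *\<^sub>R complex_of_vec v"
  unfolding complex_of_vec_def line_point_def by (simp add: complex_eq_iff)

lemma closed_segment_along_line:
  fixes c w :: "'a::real_vector"
  assumes "s \<le> t"
  shows "closed_segment (c + s *\<^sub>R w) (c + t *\<^sub>R w) = (\<lambda>\<mu>. c + \<mu> *\<^sub>R w) ` {s..t}"
proof -
  have "linear (\<lambda>\<mu>::real. \<mu> *\<^sub>R w)" by (rule linear_scaleR_left)
  then have "closed_segment (s *\<^sub>R w) (t *\<^sub>R w) = (\<lambda>\<mu>. \<mu> *\<^sub>R w) ` {s..t}"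
    using closed_segment_linear_image[of "\<lambda>\<mu>. \<mu> *\<^sub>R w" s t] closed_segment_eq_real_ivl1[OF assms]
    by simp
  then show ?thesis by (simp add: closed_segment_translation image_image)
qed

lemma vec_of_complex_closed_segment:
  assumes "x \<in> euc 2" "v \<in> euc 2" "s \<le> t"
  shows "vec_of_complex ` closed_segment (complex_of_vec (line_point x s v)) (complex_of_vec (line_point x t v))
    = (\<lambda>\<mu>. line_point x \<mu> v) ` {s..t}"
proof -
  have "vec_of_complex (complex_of_vec x + \<mu> *\<^sub>R complex_of_vec v) = line_point x \<mu> v" for \<mu>
    using vec_of_complex_of_vec[OF line_point_euc[OF assms(1,2)]] by (simp add: complex_of_vec_line_point)
  then show ?thesis
    unfolding complex_of_vec_line_point closed_segment_along_line[OF assms(3)] image_image by simp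
qed


definition perp :: "(nat \<Rightarrow> real) \<Rightarrow> (nat \<Rightarrow> real)" where
  "perp a = (\<lambda>i. if i = 0 then - a 1 else if i = 1 then a 0 else 0)"

lemma perp_euc: "perp a \<in> euc 2"
  unfolding perp_def euc_def by auto

lemma dot_perp: "dot 2 a (perp a) = 0"
  unfolding dot_two perp_def by simp

lemma dot_perp_perp: "dot 2 (perp a) (perp a) = (a 0)\<^sup>2 + (a 1)\<^sup>2"
  unfolding dot_two perp_def by (simp add: power2_eq_square)

lemma perp_pos:
  assumes "\<exists>i<2. a i \<noteq> 0"
  shows "dot 2 (perp a) (perp a) > 0"
proof -
  obtain i where "i < 2" "a i \<noteq> 0" using assms by blast
  then have "a 0 \<noteq> 0 \<or> a 1 \<noteq> 0" by (cases i) (auto simp: numeral_2_eq_2)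
  then have "perp a 1 \<noteq> 0 \<or> perp a 0 \<noteq> 0" unfolding perp_def by auto
  then show ?thesis using dot_self_pos_iff[of 2 "perp a"] by auto
qed

lemma orthogonal_in_plane_is_multiple_of_perp:
  assumes a: "\<exists>i<2. a i \<noteq> 0" and D: "D \<in> euc 2" "dot 2 a D = 0"
  shows "D = (\<lambda>i. (dot 2 (perp a) D / dot 2 (perp a) (perp a)) * perp a i)"
proof -
  define n where "n = dot 2 (perp a) (perp a)"
  have n: "n > 0" using perp_pos[OF a] unfolding n_def .
  have e: "a 0 * D 0 + a 1 * D 1 = 0" using D(2) unfolding dot_two .
  have pd: "dot 2 (perp a) D = - a 1 * D 0 + a 0 * D 1" unfolding dot_two perp_def by simp
  have "(- a 1 * D 0 + a 0 * D 1) * (- a 1) = (a 1)\<^sup>2 * D 0 - a 0 * (a 1 * D 1)"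
    by (simp add: algebra_simps power2_eq_square)
  also have "a 1 * D 1 = - (a 0 * D 0)" using e by linarith
  finally have "(- a 1 * D 0 + a 0 * D 1) * (- a 1) = n * D 0"
    unfolding n_def dot_perp_perp by (simp add: algebra_simps power2_eq_square)
  then have c0: "D 0 = (- a 1 * D 0 + a 0 * D 1) / n * (- a 1)" using n by (simp add: field_simps)
  have "(- a 1 * D 0 + a 0 * D 1) * a 0 = - a 1 * (a 0 * D 0) + (a 0)\<^sup>2 * D 1"
    by (simp add: algebra_simps power2_eq_square)
  also have "a 0 * D 0 = - (a 1 * D 1)" using e by linarith
  finally have "(- a 1 * D 0 + a 0 * D 1) * a 0 = n * D 1"
    unfolding n_def dot_perp_perp by (simp add: algebra_simps power2_eq_square)
  then have c1: "D 1 = (- a 1 * D 0 + a 0 * D 1) / n * a 0" using n by (simp add: field_simps)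
  show ?thesis
  proof
    fix i
    show "D i = dot 2 (perp a) D / dot 2 (perp a) (perp a) * perp a i"
      unfolding n_def[symmetric] pd
      using c0 c1 D(1) by (cases "i = 0"; cases "i = 1") (auto simp: perp_def euc_def)
  qed
qed

lemma disc_slice_eq_segment:
  assumes a: "\<exists>i<2. a i \<noteq> 0" and x: "x \<in> euc 2" "dot 2 a x = b"
    and inside: "\<And>\<mu>. dot 2 (line_point x \<mu> (perp a)) (line_point x \<mu> (perp a)) \<le> 1 \<longleftrightarrow> t1 \<le> \<mu> \<and> \<mu> \<le> t2"
  shows "disc 1 \<inter> hplane 2 a b = (\<lambda>\<mu>. line_point x \<mu> (perp a)) ` {t1..t2}"
proof (intro equalityI subsetI)
  fix y assume "y \<in> disc 1 \<inter> hplane 2 a b"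
  then have y: "y \<in> euc 2" "dot 2 a y = b" "dot 2 y y \<le> 1"
    unfolding disc_eq hplane_def by (auto simp: numeral_2_eq_2)
  define D where "D = (\<lambda>i. y i - x i)"
  have "D \<in> euc 2" using y x unfolding D_def euc_def by auto
  moreover have "dot 2 a D = 0" unfolding D_def dot_def using y x unfolding dot_def
    by (simp add: algebra_simps sum_subtractf)
  ultimately obtain \<mu> where "D = (\<lambda>i. \<mu> * perp a i)"
    using orthogonal_in_plane_is_multiple_of_perp[OF a] by blast
  then have "y = line_point x \<mu> (perp a)"
    unfolding line_point_def D_def by (auto simp: fun_eq_iff algebra_simps dest: fun_cong)
  with inside y(3) show "y \<in> (\<lambda>\<mu>. line_point x \<mu> (perp a)) ` {t1..t2}" by auto
next
  fix y assume "y \<in> (\<lambda>\<mu>. line_point x \<mu> (perp a)) ` {t1..t2}"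
  then obtain \<mu> where \<mu>: "y = line_point x \<mu> (perp a)" "t1 \<le> \<mu>" "\<mu> \<le> t2" by auto
  then have "dot 2 y y \<le> 1" using inside by simp
  moreover have "y \<in> euc 2" using line_point_euc[OF x(1) perp_euc] \<mu> by simp
  moreover have "dot 2 a y = b" using \<mu> x by (simp add: dot_line_point dot_perp)
  ultimately show "y \<in> disc 1 \<inter> hplane 2 a b" unfolding disc_eq hplane_def by (auto simp: numeral_2_eq_2)
qed


lemma hyp_section_is_chord:
  assumes "S \<in> hyp_sections 1"
  obtains C where "C \<in> chords" "S = vec_of_complex ` C"
proof -
  obtain a b x where "\<exists>i<Suc 1. a i \<noteq> 0" "S = disc 1 \<inter> hplane (Suc 1) a b"
    "x \<in> euc (Suc 1)" "dot (Suc 1) x x < 1" "dot (Suc 1) a x = b"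
    using hyp_sectionsE[OF assms] by blast
  then have a: "\<exists>i<2. a i \<noteq> 0" and S: "S = disc 1 \<inter> hplane 2 a b"
    and x: "x \<in> euc 2" "dot 2 x x < 1" "dot 2 a x = b"
    by (simp_all add: numeral_2_eq_2)
  let ?v = "perp a"
  obtain t1 t2 where t: "t1 < t2"
    "\<And>\<mu>. dot 2 (line_point x \<mu> ?v) (line_point x \<mu> ?v) \<le> 1 \<longleftrightarrow> t1 \<le> \<mu> \<and> \<mu> \<le> t2"
    "dot 2 (line_point x t1 ?v) (line_point x t1 ?v) = 1" "dot 2 (line_point x t2 ?v) (line_point x t2 ?v) = 1"
    using line_meets_sphere_twice[OF x(2) perp_pos[OF a]] by metis
  define P where "P = complex_of_vec (line_point x t1 ?v)"
  define Q where "Q = complex_of_vec (line_point x t2 ?v)"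
  have "S = vec_of_complex ` closed_segment P Q"
    unfolding S disc_slice_eq_segment[OF a x(1,3) t(2)] P_def Q_def
    using vec_of_complex_closed_segment[OF x(1) perp_euc] t(1) by simp
  moreover have "(cmod P)\<^sup>2 = 1" "(cmod Q)\<^sup>2 = 1"
    unfolding P_def Q_def norm_complex_of_vec_squared using t(3,4) by simp_all
  then have "cmod P = 1" "cmod Q = 1"
    using norm_ge_zero[of P] norm_ge_zero[of Q] by (auto simp: power2_eq_1_iff)
  moreover have "P \<noteq> Q"
  proof
    assume "P = Q"
    then have "(t1 - t2) *\<^sub>R complex_of_vec ?v = 0"
      unfolding P_def Q_def complex_of_vec_line_point by (simp add: scaleR_diff_left)
    then have "dot 2 ?v ?v = 0"
      using t(1) norm_complex_of_vec_squared[of ?v] by simp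
    then show False using perp_pos[OF a] by simp
  qed
  ultimately show thesis using that unfolding chords_def by blast
qed

lemma unit_circle_midpoint:
  assumes "cmod p = 1" "cmod q = 1"
  defines "x \<equiv> vec_of_complex ((p + q) / 2)" and "v \<equiv> vec_of_complex (p - q)"
  shows "dot 2 x v = 0" "dot 2 x x = 1 - dot 2 v v / 4"
proof -
  have p2: "(Re p)\<^sup>2 + (Im p)\<^sup>2 = 1" using assms(1) unfolding cmod_def by simp
  have q2: "(Re q)\<^sup>2 + (Im q)\<^sup>2 = 1" using assms(2) unfolding cmod_def by simp
  show "dot 2 x v = 0" unfolding dot_two x_def v_def vec_of_complex_def using p2 q2
    by (simp add: algebra_simps power2_eq_square) (simp add: field_simps)
  show "dot 2 x x = 1 - dot 2 v v / 4" unfolding dot_two x_def v_def vec_of_complex_def using p2 q2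
    by (simp add: algebra_simps power2_eq_square) (simp add: field_simps)
qed

lemma line_through_chord_midpoint:
  assumes "dot n x v = 0" "dot n x x = 1 - dot n v v / 4" "dot n v v > 0"
  shows "dot n (line_point x \<mu> v) (line_point x \<mu> v) \<le> 1 \<longleftrightarrow> - (1/2) \<le> \<mu> \<and> \<mu> \<le> 1/2"
proof -
  have "dot n (line_point x \<mu> v) (line_point x \<mu> v) = 1 - dot n v v / 4 + \<mu>\<^sup>2 * dot n v v"
    unfolding dot_line_point_self assms(1,2) by simp
  also have "\<dots> \<le> 1 \<longleftrightarrow> \<mu>\<^sup>2 \<le> (1/2)\<^sup>2" using assms(3) by (simp add: field_simps power2_eq_square)
  also have "\<dots> \<longleftrightarrow> \<bar>\<mu>\<bar> \<le> 1/2" by (simp add: abs_le_square_iff[symmetric])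
  finally show ?thesis by linarith
qed

lemma chord_is_hyp_section:
  assumes "C \<in> chords"
  shows "vec_of_complex ` C \<in> hyp_sections 1"
proof -
  obtain p q where "C = closed_segment p q" "cmod p = 1" "cmod q = 1" "p \<noteq> q"
    using assms unfolding chords_def by blast
  then have pq: "C = closed_segment q p" "cmod p = 1" "cmod q = 1" "p \<noteq> q"
    by (simp_all add: closed_segment_commute)
  define a where "a = (\<lambda>i::nat. if i = 0 then Im p - Im q else if i = 1 then Re q - Re p else 0)"
  define x where "x = vec_of_complex ((p + q) / 2)"
  define b where "b = dot 2 a x"
  have pa: "perp a = vec_of_complex (p - q)"
    unfolding perp_def a_def vec_of_complex_def by (auto simp: fun_eq_iff)
  have a: "\<exists>i<2. a i \<noteq> 0"
  proof (rule ccontr)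
    assume "\<not> (\<exists>i<2. a i \<noteq> 0)"
    then have "a 0 = 0" "a 1 = 0" by auto
    then show False using pq(4) unfolding a_def by (simp add: complex_eq_iff)
  qed
  note mid = unit_circle_midpoint[OF pq(2,3), folded x_def pa]
  have xe: "x \<in> euc 2" unfolding x_def by (rule vec_of_complex_euc)
  have "complex_of_vec (line_point x (- (1/2)) (perp a)) = q"
    "complex_of_vec (line_point x (1/2) (perp a)) = p"
    unfolding complex_of_vec_line_point pa x_def by (simp_all add: complex_eq_iff field_simps)
  then have "vec_of_complex ` C = disc 1 \<inter> hplane 2 a b"
    unfolding pq(1) disc_slice_eq_segment[OF a xe b_def[symmetric]
        line_through_chord_midpoint[OF mid perp_pos[OF a]]]
    using vec_of_complex_closed_segment[OF xe perp_euc[of a], of "- (1/2)" "1/2"] by simp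
  moreover have "is_hyperplane (Suc 1) (hplane 2 a b)"
    unfolding is_hyperplane_def hplane_def dot_def using a by (auto simp: numeral_2_eq_2)
  moreover have "x \<in> hplane 2 a b \<inter> disc_interior 1"
    unfolding hplane_def disc_interior_eq b_def using xe mid(2) perp_pos[OF a]
    by (auto simp: numeral_2_eq_2)
  ultimately show ?thesis unfolding hyp_sections_def by (auto simp: numeral_2_eq_2)
qed


lemma hyp_sections_graph_iff_circle_graph:
  assumes "countable V"
  shows "is_intersection_graph_of (hyp_sections 1) V E \<longleftrightarrow> is_intersection_graph_of chords V E"
proof
  assume "is_intersection_graph_of (hyp_sections 1) V E"
  then show "is_intersection_graph_of chords V E"
  proof (rule is_intersection_graph_of_transfer[OF _ assms])
    fix \<S> assume \<S>: "\<S> \<subseteq> hyp_sections 1"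
    have "S \<subseteq> range vec_of_complex \<and> vec_of_complex -` S \<in> chords" if S: "S \<in> \<S>" for S
    proof -
      have "S \<in> hyp_sections 1" using S \<S> by blast
      then obtain C where "C \<in> chords" "S = vec_of_complex ` C"
        by (rule hyp_section_is_chord)
      then show ?thesis by (simp add: inj_vimage_image_eq[OF inj_vec_of_complex] image_subsetI)
    qed
    then have "intersection_embedding (vimage vec_of_complex) \<S> chords"
      by (intro vimage_intersection_embedding) simp_all
    then show "\<exists>g. intersection_embedding g \<S> chords" by (rule exI[of _ "vimage vec_of_complex"])
  qed
next
  assume "is_intersection_graph_of chords V E"
  then show "is_intersection_graph_of (hyp_sections 1) V E"
  proof (rule is_intersection_graph_of_transfer[OF _ assms])
    fix \<C> assume "\<C> \<subseteq> chords"
    then have "intersection_embedding (image vec_of_complex) \<C> (hyp_sections 1)"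
      using chord_is_hyp_section by (intro image_intersection_embedding[OF inj_vec_of_complex]) blast
    then show "\<exists>g. intersection_embedding g \<C> (hyp_sections 1)" by (rule exI[of _ "image vec_of_complex"])
  qed
qed

theorem mainTheorem3:
  fixes d :: nat and V :: "'v set" and E :: "'v \<Rightarrow> 'v \<Rightarrow> bool"
  assumes "d \<ge> 1" and "graph V E" and "countable V"
  shows "d_sphere_graph d V E \<longleftrightarrow> in_S d V E"
proof (cases "d = 1")
  case True
  then show ?thesis
    unfolding d_sphere_graph_def in_S_def using hyp_sections_graph_iff_circle_graph[OF assms(3)] by simp
next
  case False
  then have "d \<ge> 2" using assms(1) by simp
  then show ?thesis
    unfolding d_sphere_graph_def in_S_def
    using hyp_sections_graph_iff_spheres_graph[OF _ assms(3)] False by simp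
qed

end
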